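(* Let $(F,\delta)$ be a differential field of characteristic zero and $(F(t),\delta)$ a monomial extension of $(F,\delta)$. If $f\in F(t)$ is stable in $(F(t),\delta)$, then $\nu_p(f)\ge0$ for every irreducible normal polynomial $p\in F[t]$; i.e., every irreducible factor of the denominator of $f$ is a special polynomial.
   Context: A differential field $(K,\delta)$ is a field with an additive map $\delta$ satisfying the Leibniz rule. $(F(t),\delta)$ is a monomial extension of $(F,\delta)$ if $t$ is transcendental over $F$, the derivation on $F(t)$ extends that of $F$, and $\delta(t)\in F[t]$. A polynomial $p\in F[t]$ is normal if $\gcd(p,\delta(p))=1$ and special if $\gcd(p,\delta(p))=p$. For an irreducible $p\in F[t]$ and nonzero $f\in F(t)$, writing $f=p^m a/b$ with $m\in\mathbb{Z}$, $a,b\in F[t]$, $\gcd(a,b)=1$, $p\nmid ab$, the order is $\nu_p(f)=m$; $\nu_p(0)=+\infty$. An element $f$ is stable in $(F(t),\delta)$ if there is a sequence $(a_i)_{i\ge0}$ in $F(t)$ with $a_0=f$ and $\delta(a_{i+1})=a_i$ for all $i\in\mathbb{N}$. *)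

theory Defs
  imports "HOL-Computational_Algebra.Computational_Algebra"
begin

text \<open>The field F(t) of rational functions over F is modelled as the fraction
field of the polynomial ring F[t]; polynomials are embedded via Fract p 1.\<close>

definition derivation :: "('b::comm_ring_1 \<Rightarrow> 'b) \<Rightarrow> bool" where
  "derivation D \<longleftrightarrow> (\<forall>x y. D (x + y) = D x + D y) \<and> (\<forall>x y. D (x * y) = D x * y + x * D y)"

definition monomial_extension ::
  "('a::field \<Rightarrow> 'a) \<Rightarrow> ('a poly fract \<Rightarrow> 'a poly fract) \<Rightarrow> bool" where
  "monomial_extension dF D \<longleftrightarrow>
     derivation dF \<and> derivation D \<and>
     (\<forall>c. D (Fract [:c:] 1) = Fract [:dF c:] 1) \<and>
     (\<exists>q. D (Fract [:0, 1:] 1) = Fract q 1)"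

definition normal_poly :: "('a::field poly fract \<Rightarrow> 'a poly fract) \<Rightarrow> 'a poly \<Rightarrow> bool" where
  "normal_poly D p \<longleftrightarrow> (\<exists>q. D (Fract p 1) = Fract q 1 \<and> coprime p q)"

text \<open>Order of a nonzero f at the irreducible p: the unique m with
  f = p^m a / b, coprime a b, p dividing neither a nor b. For f = 0 the order is
  +infinity; we only use it for nonzero f.\<close>
definition nu :: "'a::field poly \<Rightarrow> 'a poly fract \<Rightarrow> int" where
  "nu p f = (THE m. \<exists>a b. b \<noteq> 0 \<and> coprime a b \<and> \<not> p dvd a \<and> \<not> p dvd b \<and>
                        f = Fract p 1 powi m * Fract a b)"

definition stable_elem :: "('a::field poly fract \<Rightarrow> 'a poly fract) \<Rightarrow> 'a poly fract \<Rightarrow> bool" where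
  "stable_elem D f \<longleftrightarrow> (\<exists>a :: nat \<Rightarrow> 'a poly fract. a 0 = f \<and> (\<forall>i. D (a (Suc i)) = a i))"

end

theory Submission
  imports Defs
begin

text \<open>Differentiation lowers a negative order at p by
  exactly one: for g = a / (p^m b) with m > 0 and p dividing neither a nor b, D g has
  denominator p^(m+1) b^2 and a numerator congruent to -m a (D p) b modulo p, which is prime
  to p because p does not divide D p and the characteristic is zero. On the other hand, an
  element without pole at p has a derivative without pole at p. Hence if D a(i+1) = a(i) and
  f = a(0) has a pole at p, then every a(i) has a pole at p, of order exactly i plus the
  order of the pole of f, which is absurd for large i.\<close>

lemma derivation_zero:
  assumes "derivation D"
  shows "D 0 = 0"
  using assms unfolding derivation_def by (metis add_cancel_right_right add_0)

lemma derivation_power: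
  assumes "derivation D"
  shows "D (x ^ Suc n) = of_nat (Suc n) * x ^ n * D x"
proof (induction n)
  case 0
  show ?case by simp
next
  case (Suc n)
  have "D (x ^ Suc (Suc n)) = D x * x ^ Suc n + x * D (x ^ Suc n)"
    using assms unfolding derivation_def by (metis power_Suc)
  also have "\<dots> = of_nat (Suc (Suc n)) * x ^ Suc n * D x"
    unfolding Suc by (simp add: algebra_simps)
  finally show ?case .
qed

lemma derivation_divide:
  fixes D :: "'a::field \<Rightarrow> 'a"
  assumes "derivation D" "y \<noteq> 0"
  shows "D (x / y) = (D x * y - x * D y) / y\<^sup>2"
proof -
  have "D x = D (x / y) * y + x / y * D y"
    using assms unfolding derivation_def by (metis nonzero_divide_eq_eq)
  with \<open>y \<noteq> 0\<close> show ?thesis by (simp add: field_simps power2_eq_square)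
qed

lemma derivation_prime_power_quotient_numerator:
  fixes d :: "'a::field_char_0 poly \<Rightarrow> 'a poly"
  assumes d: "derivation d" and p: "prime_elem p" "\<not> p dvd d p"
    and a: "\<not> p dvd a" and b: "\<not> p dvd b"
  obtains N where "d a * (p ^ Suc j * b) - a * d (p ^ Suc j * b) = p ^ j * N" "\<not> p dvd N"
proof
  define N where "N = d a * p * b - a * (of_nat (Suc j) * d p * b + p * d b)"
  have "d (p ^ Suc j * b) = of_nat (Suc j) * p ^ j * d p * b + p ^ Suc j * d b"
    using d derivation_power[OF d] unfolding derivation_def by simp
  then show "d a * (p ^ Suc j * b) - a * d (p ^ Suc j * b) = p ^ j * N"
    unfolding N_def by (simp add: algebra_simps)
  show "\<not> p dvd N"
  proof
    assume "p dvd N"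
    \<comment> \<open>Modulo p only the term coming from the derivative of the pole survives.\<close>
    moreover have "a * (of_nat (Suc j) * d p * b) = p * (d a * b - a * d b) - N"
      unfolding N_def by (simp add: algebra_simps)
    ultimately have "p dvd a * (of_nat (Suc j) * d p * b)"
      by simp
    moreover have "is_unit (of_nat (Suc j) :: 'a poly)"
      by (simp add: of_nat_poly is_unit_const_poly_iff dvd_field_iff del: of_nat_Suc)
    then have "\<not> p dvd of_nat (Suc j)"
      using prime_elem_not_unit[OF p(1)] dvd_unit_imp_unit by blast
    ultimately show False
      using p a b by (simp add: prime_elem_dvd_mult_iff)
  qed
qed

lemma Fract_1_power: "Fract (p::'a::idom) 1 ^ k = Fract (p ^ k) 1"
  by (induction k) (simp_all add: One_fract_def)

lemma Fract_factor_powers: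
  fixes p :: "'a::idom"
  assumes "p \<noteq> 0" "b \<noteq> 0"
  shows "Fract (p ^ k * a) (p ^ l * b) = Fract p 1 powi (int k - int l) * Fract a b"
proof -
  have "Fract p 1 \<noteq> 0" using assms by (simp add: Zero_fract_def eq_fract)
  then have "Fract p 1 powi (int k - int l) = Fract (p ^ k) (p ^ l)"
    by (simp add: power_int_diff Fract_1_power)
  then show ?thesis using assms by simp
qed

lemma monomial_extension_poly_closed:
  fixes D :: "'a::field poly fract \<Rightarrow> 'a poly fract"
  assumes "monomial_extension dF D"
  shows "\<exists>r. D (Fract q 1) = Fract r 1"
proof (induction q rule: pCons_induct)
  case 0
  have "D 0 = 0"
    using assms derivation_zero unfolding monomial_extension_def by blast
  then show ?case by (metis Zero_fract_def)
next
  case (pCons c q)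
  from pCons.IH obtain r where r: "D (Fract q 1) = Fract r 1" ..
  from assms obtain s where s: "D (Fract [:0, 1:] 1) = Fract s 1"
    and dc: "D (Fract [:c:] 1) = Fract [:dF c:] 1" and "derivation D"
    unfolding monomial_extension_def by blast
  have "Fract (pCons c q) 1 = Fract [:c:] 1 + Fract [:0, 1:] 1 * Fract q 1"
    by (simp add: pCons_one)
  then have "D (Fract (pCons c q) 1) =
      D (Fract [:c:] 1) + (D (Fract [:0, 1:] 1) * Fract q 1 + Fract [:0, 1:] 1 * D (Fract q 1))"
    using \<open>derivation D\<close> unfolding derivation_def by (simp only:)
  also have "\<dots> = Fract ([:dF c:] + (s * q + [:0, 1:] * r)) 1"
    by (simp add: r s dc)
  finally show ?case ..
qed

definition poly_der :: "('a::field poly fract \<Rightarrow> 'a poly fract) \<Rightarrow> 'a poly \<Rightarrow> 'a poly" where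
  "poly_der D q = (SOME r. D (Fract q 1) = Fract r 1)"

lemma Fract_poly_der:
  assumes "monomial_extension dF D"
  shows "D (Fract q 1) = Fract (poly_der D q) 1"
  unfolding poly_der_def by (rule someI_ex[OF monomial_extension_poly_closed[OF assms]])

lemma derivation_poly_der:
  assumes "monomial_extension dF D"
  shows "derivation (poly_der D)"
  unfolding derivation_def
proof (intro conjI allI)
  have der: "derivation D" using assms unfolding monomial_extension_def by blast
  fix x y
  have "Fract (poly_der D (x + y)) 1 = D (Fract x 1 + Fract y 1)"
    by (simp add: Fract_poly_der[OF assms])
  also have "\<dots> = D (Fract x 1) + D (Fract y 1)"
    using der unfolding derivation_def by blast
  finally show "poly_der D (x + y) = poly_der D x + poly_der D y"
    by (simp add: Fract_poly_der[OF assms] eq_fract)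
  have "Fract (poly_der D (x * y)) 1 = D (Fract x 1 * Fract y 1)"
    by (simp add: Fract_poly_der[OF assms])
  also have "\<dots> = D (Fract x 1) * Fract y 1 + Fract x 1 * D (Fract y 1)"
    using der unfolding derivation_def by blast
  finally show "poly_der D (x * y) = poly_der D x * y + x * poly_der D y"
    by (simp add: Fract_poly_der[OF assms] eq_fract)
qed

lemma monomial_extension_Fract:
  assumes "monomial_extension dF D" "b \<noteq> 0"
  shows "D (Fract a b) = Fract (poly_der D a * b - a * poly_der D b) (b\<^sup>2)"
proof -
  have der: "derivation D" using assms unfolding monomial_extension_def by blast
  have nz: "Fract b 1 \<noteq> 0" using assms(2) by (simp add: Zero_fract_def eq_fract)
  have "D (Fract a b) = D (Fract a 1 / Fract b 1)"
    by simp
  also have "\<dots> = (D (Fract a 1) * Fract b 1 - Fract a 1 * D (Fract b 1)) / (Fract b 1)\<^sup>2"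
    by (rule derivation_divide[OF der nz])
  also have "\<dots> = Fract (poly_der D a * b - a * poly_der D b) (b\<^sup>2)"
    using assms(2) by (simp add: Fract_poly_der[OF assms(1)] Fract_1_power)
  finally show ?thesis .
qed

lemma normal_poly_not_dvd_poly_der:
  assumes "monomial_extension dF D" "normal_poly D p" "\<not> is_unit p"
  shows "\<not> p dvd poly_der D p"
proof -
  from assms(2) obtain q where "D (Fract p 1) = Fract q 1" "coprime p q"
    unfolding normal_poly_def by blast
  then have "coprime p (poly_der D p)"
    using Fract_poly_der[OF assms(1)] by (simp add: eq_fract)
  with assms(3) show ?thesis
    using coprime_common_divisor[OF _ dvd_refl] by blast
qed

lemma Fract_prime_power_exponent_unique:
  fixes p :: "'a::idom"
  assumes p: "prime_elem p" and "b \<noteq> 0" "d \<noteq> 0"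
    and "\<not> p dvd a" "\<not> p dvd b" "\<not> p dvd c" "\<not> p dvd d"
    and "Fract p 1 powi n * Fract a b = Fract p 1 powi m * Fract c d"
  shows "n = m"
proof -
  have "Fract p 1 \<noteq> 0" using p by (auto simp: Zero_fract_def eq_fract)
  have False if "n' < m'" "b' \<noteq> 0" "d' \<noteq> 0" "\<not> p dvd a'" "\<not> p dvd d'"
    and eq: "Fract p 1 powi n' * Fract a' b' = Fract p 1 powi m' * Fract c' d'" for n' m' a' b' c' d'
  proof -
    define k where "k = nat (m' - n')"
    have "Fract p 1 powi n' \<noteq> 0" using \<open>Fract p 1 \<noteq> 0\<close> by simp
    then have "Fract a' b' = Fract p 1 powi m' * Fract c' d' / Fract p 1 powi n'"
      using eq by (metis nonzero_mult_div_cancel_left)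
    also have "\<dots> = Fract p 1 powi (m' - n') * Fract c' d'"
      using \<open>Fract p 1 \<noteq> 0\<close> by (simp add: power_int_diff)
    also have "\<dots> = Fract (p ^ k * c') (p ^ 0 * d')"
      using Fract_factor_powers[of p d' k c' 0] p that by (simp add: k_def)
    finally have "a' * d' = p ^ k * c' * b'"
      using that by (simp add: eq_fract)
    moreover have "p dvd p ^ k" using that by (simp add: k_def)
    ultimately have "p dvd a' * d'" by (metis dvd_mult2)
    with p that show False by (simp add: prime_elem_dvd_mult_iff)
  qed
  with assms show ?thesis by (metis linorder_neqE)
qed

lemma field_poly_prime_power_decompose:
  fixes p c :: "'a::field poly"
  assumes "prime_elem p" "c \<noteq> 0"
  shows "\<exists>k a. c = p ^ k * a \<and> \<not> p dvd a"
  using assms(2)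
proof (induction "degree c" arbitrary: c rule: less_induct)
  case less
  show ?case
  proof (cases "p dvd c")
    case True
    then obtain c' where c': "c = p * c'" ..
    have "degree p > 0" using assms(1) is_unit_iff_degree[of p] by (auto simp: prime_elem_def)
    with c' less.prems have "c' \<noteq> 0" "degree c' < degree c" by (auto simp: degree_mult_eq)
    with less.hyps obtain k a where "c' = p ^ k * a" "\<not> p dvd a" by blast
    with c' have "c = p ^ Suc k * a" "\<not> p dvd a" by simp_all
    then show ?thesis by blast
  qed (metis power_0 mult_1)
qed

lemma field_poly_Fract_coprime_representation:
  fixes c d :: "'a::field poly"
  assumes "d \<noteq> 0"
  shows "\<exists>a b. b \<noteq> 0 \<and> coprime a b \<and> a dvd c \<and> b dvd d \<and> Fract c d = Fract a b"
  using assms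
proof (induction "degree d" arbitrary: c d rule: less_induct)
  case less
  show ?case
  proof (cases "coprime c d")
    case True
    with less.prems show ?thesis by (intro exI[of _ c] exI[of _ d]) simp
  next
    case False
    then obtain g where g: "g dvd c" "g dvd d" "\<not> is_unit g" by (rule not_coprimeE)
    obtain c' d' where cd': "c = g * c'" "d = g * d'" using g by (auto elim!: dvdE)
    with less.prems have "g \<noteq> 0" "d' \<noteq> 0" by auto
    with g(3) have "degree g > 0" using is_unit_iff_degree[of g] by auto
    with \<open>g \<noteq> 0\<close> \<open>d' \<noteq> 0\<close> have "degree d' < degree d" by (simp add: cd' degree_mult_eq)
    with less.hyps \<open>d' \<noteq> 0\<close> obtain a b
      where ab: "b \<noteq> 0" "coprime a b" "a dvd c'" "b dvd d'" "Fract c' d' = Fract a b" by blast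
    have "a dvd c" "b dvd d" using ab(3,4) cd' by simp_all
    moreover have "Fract c d = Fract a b"
      using \<open>g \<noteq> 0\<close> \<open>d' \<noteq> 0\<close> ab(5) by (simp add: cd' mult_fract_cancel)
    ultimately show ?thesis using ab(1,2) by blast
  qed
qed

lemma nu_eqI:
  fixes p :: "'a::field poly"
  assumes p: "prime_elem p" and "b \<noteq> 0" "\<not> p dvd a" "\<not> p dvd b"
    and h: "h = Fract p 1 powi n * Fract a b"
  shows "nu p h = n"
  unfolding nu_def
proof (rule the_equality)
  obtain a' b' where "b' \<noteq> 0" "coprime a' b'" "a' dvd a" "b' dvd b" "Fract a b = Fract a' b'"
    using field_poly_Fract_coprime_representation[OF \<open>b \<noteq> 0\<close>] by blast
  moreover have "\<not> p dvd a'" "\<not> p dvd b'"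
    using assms calculation by (meson dvd_trans)+
  ultimately show "\<exists>a b. b \<noteq> 0 \<and> coprime a b \<and> \<not> p dvd a \<and> \<not> p dvd b \<and>
      h = Fract p 1 powi n * Fract a b"
    using h by auto
next
  fix m
  assume "\<exists>a' b'. b' \<noteq> 0 \<and> coprime a' b' \<and> \<not> p dvd a' \<and> \<not> p dvd b' \<and>
      h = Fract p 1 powi m * Fract a' b'"
  then show "m = n"
    using Fract_prime_power_exponent_unique[OF p] assms(2-4) h by metis
qed

lemma nu_representation:
  fixes p :: "'a::field poly"
  assumes p: "prime_elem p" and "h \<noteq> 0"
  obtains a b where "b \<noteq> 0" "\<not> p dvd a" "\<not> p dvd b" "h = Fract p 1 powi nu p h * Fract a b"
proof -
  obtain c d where h: "h = Fract c d" "d \<noteq> 0" by (cases h)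
  with \<open>h \<noteq> 0\<close> have "c \<noteq> 0" by (auto simp: Zero_fract_def eq_fract)
  obtain k a where a: "c = p ^ k * a" "\<not> p dvd a"
    using field_poly_prime_power_decompose[OF p \<open>c \<noteq> 0\<close>] by blast
  obtain l b where b: "d = p ^ l * b" "\<not> p dvd b"
    using field_poly_prime_power_decompose[OF p \<open>d \<noteq> 0\<close>] by blast
  have "b \<noteq> 0" "p \<noteq> 0" using b h(2) p by auto
  then have "h = Fract p 1 powi (int k - int l) * Fract a b"
    using Fract_factor_powers h(1) a(1) b(1) by metis
  moreover from this have "nu p h = int k - int l"
    using nu_eqI[OF p \<open>b \<noteq> 0\<close> a(2) b(2)] by blast
  ultimately show thesis using that \<open>b \<noteq> 0\<close> a(2) b(2) by simp
qed

lemma nu_derivative_nonneg: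
  assumes me: "monomial_extension dF D" and p: "prime_elem p"
    and "0 \<le> nu p g" "D g \<noteq> 0"
  shows "0 \<le> nu p (D g)"
proof -
  have "p \<noteq> 0" using p by auto
  have "g \<noteq> 0"
    using assms(4) me derivation_zero unfolding monomial_extension_def by blast
  with p obtain a b where ab: "b \<noteq> 0" "\<not> p dvd a" "\<not> p dvd b"
    and g: "g = Fract p 1 powi nu p g * Fract a b"
    by (rule nu_representation)
  define c where "c = p ^ nat (nu p g) * a"
  have "g = Fract c b"
    using Fract_factor_powers[OF \<open>p \<noteq> 0\<close> \<open>b \<noteq> 0\<close>, of "nat (nu p g)" a 0] \<open>0 \<le> nu p g\<close> g
    by (simp add: c_def)
  define N where "N = poly_der D c * b - c * poly_der D b"
  have N: "D g = Fract N (b\<^sup>2)"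
    using monomial_extension_Fract[OF me \<open>b \<noteq> 0\<close>] by (simp add: N_def \<open>g = Fract c b\<close>)
  with assms(4) have "N \<noteq> 0" by (auto simp: Zero_fract_def eq_fract)
  then obtain k N' where N': "N = p ^ k * N'" "\<not> p dvd N'"
    using field_poly_prime_power_decompose[OF p] by blast
  have "b\<^sup>2 \<noteq> 0" "\<not> p dvd b\<^sup>2"
    using ab p by (auto dest: prime_elem_dvd_power)
  moreover have "D g = Fract p 1 powi int k * Fract N' (b\<^sup>2)"
    using Fract_factor_powers[OF \<open>p \<noteq> 0\<close> \<open>b\<^sup>2 \<noteq> 0\<close>, of k N' 0] N N' by simp
  ultimately have "nu p (D g) = int k"
    using nu_eqI[OF p] N'(2) by blast
  then show ?thesis by simp
qed

lemma nu_derivative_pole: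
  fixes D :: "'a::field_char_0 poly fract \<Rightarrow> 'a poly fract"
  assumes me: "monomial_extension dF D" and p: "prime_elem p" "\<not> p dvd poly_der D p"
    and "g \<noteq> 0" "nu p g < 0"
  shows "nu p (D g) = nu p g - 1"
proof -
  have "p \<noteq> 0" using p by auto
  obtain a b where ab: "b \<noteq> 0" "\<not> p dvd a" "\<not> p dvd b"
    and g: "g = Fract p 1 powi nu p g * Fract a b"
    using nu_representation[OF p(1) \<open>g \<noteq> 0\<close>] by blast
  define j where "j = nat (- nu p g) - 1"
  have nu_g: "nu p g = - int (Suc j)" using \<open>nu p g < 0\<close> by (simp add: j_def)
  define B where "B = p ^ Suc j * b"
  have "B \<noteq> 0" using \<open>p \<noteq> 0\<close> ab(1) by (simp add: B_def)
  have "g = Fract a B"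
    using g Fract_factor_powers[OF \<open>p \<noteq> 0\<close> \<open>b \<noteq> 0\<close>, of 0 a "Suc j"] nu_g by (simp add: B_def)
  obtain N where N: "poly_der D a * B - a * poly_der D B = p ^ j * N" "\<not> p dvd N"
    using derivation_prime_power_quotient_numerator[OF derivation_poly_der[OF me] p ab(2,3)]
    unfolding B_def by blast
  have "b\<^sup>2 \<noteq> 0" "\<not> p dvd b\<^sup>2"
    using ab p by (auto dest: prime_elem_dvd_power)
  have "D g = Fract (p ^ j * N) (B\<^sup>2)"
    using monomial_extension_Fract[OF me \<open>B \<noteq> 0\<close>] N(1) \<open>g = Fract a B\<close> by simp
  also have "\<dots> = Fract (p ^ 0 * N) (p ^ Suc (Suc j) * b\<^sup>2)"
    using \<open>p \<noteq> 0\<close> ab(1) by (simp add: B_def eq_fract power2_eq_square algebra_simps)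
  also have "\<dots> = Fract p 1 powi (nu p g - 1) * Fract N (b\<^sup>2)"
    using Fract_factor_powers[OF \<open>p \<noteq> 0\<close> \<open>b\<^sup>2 \<noteq> 0\<close>, of 0 N "Suc (Suc j)"] nu_g by simp
  finally show ?thesis
    using nu_eqI[OF p(1) \<open>b\<^sup>2 \<noteq> 0\<close> N(2) \<open>\<not> p dvd b\<^sup>2\<close>] by blast
qed

lemma nu_antiderivative:
  fixes D :: "'a::field_char_0 poly fract \<Rightarrow> 'a poly fract"
  assumes me: "monomial_extension dF D" and p: "prime_elem p" "\<not> p dvd poly_der D p"
    and "D g = h" "h \<noteq> 0" "nu p h < 0"
  shows "g \<noteq> 0 \<and> nu p g < 0 \<and> nu p g = nu p h + 1"
proof (intro conjI)
  show "g \<noteq> 0"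
    using assms(4,5) me derivation_zero unfolding monomial_extension_def by blast
  show "nu p g < 0"
    using nu_derivative_nonneg[OF me p(1), of g] assms(4-6) by force
  then show "nu p g = nu p h + 1"
    using nu_derivative_pole[OF me p \<open>g \<noteq> 0\<close>] assms(4) by simp
qed

theorem corollary2p15:
  fixes dF :: "'a::field_char_0 \<Rightarrow> 'a"
    and D :: "'a poly fract \<Rightarrow> 'a poly fract"
    and f :: "'a poly fract"
  assumes "monomial_extension dF D"
    and "stable_elem D f"
  shows "\<forall>p. irreducible p \<and> normal_poly D p \<longrightarrow> (f \<noteq> 0 \<longrightarrow> nu p f \<ge> 0)"
proof (intro allI impI)
  fix p :: "'a poly"
  assume "irreducible p \<and> normal_poly D p" and "f \<noteq> 0"
  then have p: "prime_elem p" "\<not> p dvd poly_der D p"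
    using field_poly_irreducible_imp_prime normal_poly_not_dvd_poly_der[OF assms(1)]
    by (auto simp: irreducible_def)
  from assms(2) obtain a where "a 0 = f" and a_Suc: "\<And>i. D (a (Suc i)) = a i"
    unfolding stable_elem_def by blast
  show "0 \<le> nu p f"
  proof (rule ccontr)
    assume "\<not> 0 \<le> nu p f"
    have "a i \<noteq> 0 \<and> nu p (a i) < 0 \<and> nu p (a i) = nu p f + int i" for i
    proof (induction i)
      case 0
      then show ?case using \<open>a 0 = f\<close> \<open>f \<noteq> 0\<close> \<open>\<not> 0 \<le> nu p f\<close> by simp
    next
      case (Suc i)
      then have "a (Suc i) \<noteq> 0 \<and> nu p (a (Suc i)) < 0 \<and> nu p (a (Suc i)) = nu p (a i) + 1"
        using nu_antiderivative[OF assms(1) p a_Suc] by blast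
      with Suc.IH show ?case by simp
    qed
    from this[of "nat (- nu p f)"] \<open>\<not> 0 \<le> nu p f\<close> show False by simp
  qed
qed

end
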